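(* Let $\mathbf D_0\in\mathcal D$. For any $\mathbf W\in\mathcal W_{\mathbf D_0}$, $\mathbf v\in\mathcal S^p$, $t\ge0$ and $J\subseteq\{1,\dots,p\}$, writing $\mathbf D(t)=\mathbf D(\mathbf W,\mathbf v,t)$, $$|||[\mathbf D(t)-\mathbf D_0]_J|||_2^2\le\|[\mathbf D(t)-\mathbf D_0]_J\|_F^2\le t^2\|\mathbf v_J\|_2^2,$$ $$|||(\mathbf I-\mathbf P_J(t))[\mathbf D_0]_J|||_2^2\le\|(\mathbf I-\mathbf P_J(t))[\mathbf D_0]_J\|_F^2\le t^2\|\mathbf v_J\|_2^2.$$
   Context: $\mathcal D$: real $m\times p$ matrices with unit $\ell_2$-norm columns; $\mathcal S^p$: unit sphere of $\mathbb R^p$; $\mathcal W_{\mathbf D_0}=\{\mathbf W:\mathrm{diag}(\mathbf W^\top\mathbf D_0)=\mathbf 0,\mathrm{diag}(\mathbf W^\top\mathbf W)=\mathbf 1\}$; $\mathbf D(\mathbf W,\mathbf v,t)=\mathbf D_0\mathrm{Diag}[\cos(\mathbf vt)]+\mathbf W\mathrm{Diag}[\sin(\mathbf vt)]$. For a matrix $\mathbf M$, $\mathbf M_J$ is the submatrix of columns indexed by $J$, and $\mathbf v_J$ the subvector. $\mathbf P_J(t)\in\mathbb R^{m\times m}$ is the orthogonal projector onto the span of the columns of $[\mathbf D(t)]_J$. $|||\cdot|||_2$ spectral norm. *)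

theory Defs
  imports "HOL-Analysis.Analysis"
begin

text \<open>Matrices are \<open>real^'p^'m\<close> (m rows indexed by 'm, p columns indexed by 'p).\<close>

definition Dcurve :: "real^'p^'m \<Rightarrow> real^'p^'m \<Rightarrow> real^'p \<Rightarrow> real \<Rightarrow> real^'p^'m" where
  "Dcurve D0 W v t = (\<chi> i k. D0$i$k * cos (v$k * t) + W$i$k * sin (v$k * t))"

text \<open>Column restriction M_J: columns outside J are replaced by zero columns
  (same spectral and Frobenius norm as the m x |J| submatrix).\<close>
definition colrestrict :: "'p set \<Rightarrow> real^'p^'m \<Rightarrow> real^'p^'m" where
  "colrestrict J A = (\<chi> i k. if k \<in> J then A$i$k else 0)"

definition vrestrict :: "'p set \<Rightarrow> real^'p \<Rightarrow> real^'p" where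
  "vrestrict J v = (\<chi> k. if k \<in> J then v$k else 0)"

definition spec_norm :: "real^'n^'m \<Rightarrow> real" where
  "spec_norm A = onorm (\<lambda>x. A *v x)"

definition frob_norm :: "real^'n^'m \<Rightarrow> real" where
  "frob_norm A = sqrt (\<Sum>i\<in>UNIV. \<Sum>j\<in>UNIV. (A$i$j)^2)"

definition orth_proj :: "'a::euclidean_space set \<Rightarrow> 'a \<Rightarrow> 'a" where
  "orth_proj S x = (THE y. y \<in> span S \<and> (\<forall>z\<in>span S. inner (x - y) z = 0))"

definition proj_matrix :: "(real^'m) set \<Rightarrow> real^'m^'m" where
  "proj_matrix S = (\<chi> i j. orth_proj S (axis j 1) $ i)"

definition PJ :: "'p set \<Rightarrow> real^'p^'m \<Rightarrow> real^'m^'m" where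
  "PJ J D = proj_matrix {column k D | k. k \<in> J}"

end

theory Submission
  imports Defs
begin

text \<open>
  Column \<open>k\<close> of \<open>D(t) - D\<^sub>0\<close> is \<open>(cos(v\<^sub>k t) - 1) d\<^sub>k + sin(v\<^sub>k t) w\<^sub>k\<close> with \<open>d\<^sub>k \<bottom> w\<^sub>k\<close> unit vectors,
  whose squared length is \<open>2 - 2 cos(v\<^sub>k t) \<le> (v\<^sub>k t)\<^sup>2\<close>; summing over \<open>k \<in> J\<close> bounds the
  Frobenius norm, which dominates the spectral norm. For the projected matrix, column
  \<open>k \<in> J\<close> is \<open>(I - P\<^sub>J(t)) d\<^sub>k\<close>, and since column \<open>k\<close> of \<open>D(t)\<close> lies in the range of \<open>P\<^sub>J(t)\<close>,
  the best-approximation property of orthogonal projections bounds its length by that of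
  column \<open>k\<close> of \<open>D(t) - D\<^sub>0\<close>.
\<close>

lemma orth_proj_exists:
  fixes S :: "'a::euclidean_space set"
  shows "\<exists>y. y \<in> span S \<and> (\<forall>z\<in>span S. inner (x - y) z = 0)"
proof -
  obtain y z where "y \<in> span S" "\<And>w. w \<in> span S \<Longrightarrow> orthogonal z w" "x = y + z"
    using orthogonal_subspace_decomp_exists by blast
  then show ?thesis
    by (auto simp: orthogonal_def)
qed

lemma orth_proj_unique:
  fixes S :: "'a::euclidean_space set"
  assumes "y1 \<in> span S" "\<forall>z\<in>span S. inner (x - y1) z = 0"
    and "y2 \<in> span S" "\<forall>z\<in>span S. inner (x - y2) z = 0"
  shows "y1 = y2"
proof -
  have "y1 - y2 \<in> span S"
    using assms by (simp add: span_diff)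
  then have "inner (x - y2) (y1 - y2) - inner (x - y1) (y1 - y2) = 0"
    using assms by simp
  then have "inner (y1 - y2) (y1 - y2) = 0"
    by (simp add: inner_diff_left)
  then show ?thesis
    by simp
qed

lemma orth_proj_in_span_orthogonal:
  fixes S :: "'a::euclidean_space set"
  shows "orth_proj S x \<in> span S \<and> (\<forall>z\<in>span S. inner (x - orth_proj S x) z = 0)"
  unfolding orth_proj_def
  by (rule theI') (use orth_proj_exists[of S x] orth_proj_unique[of _ S x] in blast)

lemma orth_proj_eqI:
  fixes S :: "'a::euclidean_space set"
  assumes "y \<in> span S" "\<forall>z\<in>span S. inner (x - y) z = 0"
  shows "orth_proj S x = y"
  using orth_proj_unique[OF _ _ assms] orth_proj_in_span_orthogonal by blast

lemma linear_orth_proj: "linear (orth_proj (S :: 'a::euclidean_space set))"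
proof (rule linearI)
  fix x y
  show "orth_proj S (x + y) = orth_proj S x + orth_proj S y"
    using orth_proj_in_span_orthogonal[of S x] orth_proj_in_span_orthogonal[of S y]
    by (intro orth_proj_eqI) (auto simp: span_add algebra_simps inner_diff_left inner_add_left)
next
  fix c :: real and x
  show "orth_proj S (c *\<^sub>R x) = c *\<^sub>R orth_proj S x"
    using orth_proj_in_span_orthogonal[of S x]
    by (intro orth_proj_eqI)
      (auto simp: span_scale inner_diff_left inner_scaleR_left scaleR_diff_right[symmetric])
qed

lemma proj_matrix_mult_vector: "proj_matrix S *v x = orth_proj S x"
proof -
  have "proj_matrix S = matrix (orth_proj S)"
    by (simp add: proj_matrix_def matrix_def)
  then show ?thesis
    by (simp add: linear_orth_proj matrix_works)
qed

lemma norm_diff_orth_proj_le: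
  fixes S :: "'a::euclidean_space set"
  assumes "d \<in> span S"
  shows "norm (x - orth_proj S x) \<le> norm (x - d)"
proof -
  have "orth_proj S x - d \<in> span S"
    using assms orth_proj_in_span_orthogonal[of S x] by (simp add: span_diff)
  then have "orthogonal (x - orth_proj S x) (orth_proj S x - d)"
    using orth_proj_in_span_orthogonal[of S x] by (simp add: orthogonal_def)
  then have "(norm (x - d))\<^sup>2 = (norm (x - orth_proj S x))\<^sup>2 + (norm (orth_proj S x - d))\<^sup>2"
    using norm_add_Pythagorean by fastforce
  then have "(norm (x - orth_proj S x))\<^sup>2 \<le> (norm (x - d))\<^sup>2"
    by simp
  then show ?thesis
    by (rule power2_le_imp_le) simp
qed

lemma norm_sq_vec: "(norm (x::real^'n))\<^sup>2 = (\<Sum>i\<in>UNIV. (x$i)\<^sup>2)"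
  by (simp only: power2_norm_eq_inner) (simp add: inner_vec_def power2_eq_square)

lemma frob_norm_sq_columns: "(frob_norm A)\<^sup>2 = (\<Sum>j\<in>UNIV. (norm (column j A))\<^sup>2)"
proof -
  have "(frob_norm A)\<^sup>2 = (\<Sum>i\<in>UNIV. \<Sum>j\<in>UNIV. (A$i$j)\<^sup>2)"
    unfolding frob_norm_def by (simp add: sum_nonneg)
  also have "\<dots> = (\<Sum>j\<in>UNIV. \<Sum>i\<in>UNIV. (A$i$j)\<^sup>2)"
    by (rule sum.swap)
  also have "\<dots> = (\<Sum>j\<in>UNIV. (norm (column j A))\<^sup>2)"
    by (simp add: norm_sq_vec column_def)
  finally show ?thesis .
qed

lemma frob_norm_sq_rows: "(frob_norm A)\<^sup>2 = (\<Sum>i\<in>UNIV. (norm (A$i))\<^sup>2)"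
  unfolding frob_norm_def by (simp add: sum_nonneg norm_sq_vec)

lemma spec_norm_le_frob_norm: "spec_norm (A::real^'n^'m) \<le> frob_norm A"
  unfolding spec_norm_def
proof (rule onorm_le)
  fix x :: "real^'n"
  have "(norm (A *v x))\<^sup>2 = (\<Sum>i\<in>UNIV. (inner (A$i) x)\<^sup>2)"
    by (simp add: norm_sq_vec matrix_vector_mult_def inner_vec_def)
  also have "\<dots> \<le> (\<Sum>i\<in>UNIV. (norm (A$i))\<^sup>2 * (norm x)\<^sup>2)"
    using Cauchy_Schwarz_ineq by (intro sum_mono) (simp add: power2_norm_eq_inner)
  also have "\<dots> = (frob_norm A * norm x)\<^sup>2"
    by (simp add: frob_norm_sq_rows power_mult_distrib sum_distrib_right)
  finally show "norm (A *v x) \<le> frob_norm A * norm x"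
    by (rule power2_le_imp_le) (simp add: frob_norm_def sum_nonneg)
qed

lemma spec_norm_sq_le_frob_norm_sq: "(spec_norm (A::real^'n^'m))\<^sup>2 \<le> (frob_norm A)\<^sup>2"
proof (rule power_mono[OF spec_norm_le_frob_norm])
  show "0 \<le> spec_norm A"
    unfolding spec_norm_def by (rule onorm_pos_le) simp
qed

lemma frob_norm_sq_le_vrestrict:
  fixes M :: "real^'p^'m"
  assumes "\<And>k. k \<notin> J \<Longrightarrow> column k M = 0"
    and "\<And>k. k \<in> J \<Longrightarrow> (norm (column k M))\<^sup>2 \<le> (t * v$k)\<^sup>2"
  shows "(frob_norm M)\<^sup>2 \<le> t\<^sup>2 * (norm (vrestrict J v))\<^sup>2"
proof -
  have "(frob_norm M)\<^sup>2 \<le> (\<Sum>k\<in>UNIV. t\<^sup>2 * (vrestrict J v $ k)\<^sup>2)"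
    unfolding frob_norm_sq_columns
    using assms by (intro sum_mono) (simp add: vrestrict_def power_mult_distrib)
  also have "\<dots> = t\<^sup>2 * (norm (vrestrict J v))\<^sup>2"
    by (simp add: norm_sq_vec sum_distrib_left)
  finally show ?thesis .
qed

lemma column_colrestrict: "column k (colrestrict J M) = (if k \<in> J then column k M else 0)"
  by (simp add: colrestrict_def column_def vec_eq_iff)

lemma column_diff: "column k (A - B) = column k A - column k (B::real^'p^'m)"
  by (simp add: column_def vec_eq_iff)

lemma column_matrix_mult: "column k (A ** B) = A *v column k B"
  by (simp add: column_def matrix_matrix_mult_def matrix_vector_mult_def vec_eq_iff)

lemma column_Dcurve:
  "column k (Dcurve D0 W v t) = cos (v$k * t) *\<^sub>R column k D0 + sin (v$k * t) *\<^sub>R column k W"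
  by (simp add: column_def Dcurve_def vec_eq_iff)

lemma two_minus_two_cos_le_sq: "2 - 2 * cos x \<le> (x::real)\<^sup>2"
proof -
  have "(sin (x/2))\<^sup>2 \<le> (x/2)\<^sup>2"
    using abs_sin_x_le_abs_x[of "x/2"] by (metis abs_ge_zero power2_abs power_mono)
  then show ?thesis
    using cos_double_sin[of "x/2"] by (simp add: power_divide)
qed

lemma norm_sq_rotation_diff_le:
  fixes a b :: "'a::real_inner"
  assumes "norm a = 1" "norm b = 1" "inner a b = 0"
  shows "(norm (cos x *\<^sub>R a + sin x *\<^sub>R b - a))\<^sup>2 \<le> x\<^sup>2"
proof -
  have "inner a a = 1" "inner b b = 1"
    using assms by (simp_all flip: power2_norm_eq_inner)
  then have "(norm (cos x *\<^sub>R a + sin x *\<^sub>R b - a))\<^sup>2 = (cos x - 1)\<^sup>2 + (sin x)\<^sup>2"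
    unfolding power2_norm_eq_inner using assms(3)
    by (simp add: inner_add_left inner_add_right inner_diff_left inner_diff_right
        inner_commute power2_eq_square algebra_simps)
  also have "\<dots> = 2 - 2 * cos x"
    using sin_cos_squared_add[of x] by (simp add: power2_eq_square algebra_simps)
  finally show ?thesis
    using two_minus_two_cos_le_sq[of x] by simp
qed

theorem lemma4:
  fixes D0 W :: "real^'p^'m" and v :: "real^'p" and t :: real and J :: "'p set"
  assumes D0_unit: "\<forall>k. norm (column k D0) = 1"
    and W_orth: "\<forall>k. inner (column k W) (column k D0) = 0"
    and W_unit: "\<forall>k. norm (column k W) = 1"
    and v_unit: "norm v = 1"
    and t_nonneg: "t \<ge> 0"
  shows "(spec_norm (colrestrict J (Dcurve D0 W v t - D0)))^2
           \<le> (frob_norm (colrestrict J (Dcurve D0 W v t - D0)))^2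
       \<and> (frob_norm (colrestrict J (Dcurve D0 W v t - D0)))^2
           \<le> t^2 * (norm (vrestrict J v))^2
       \<and> (spec_norm ((mat 1 - PJ J (Dcurve D0 W v t)) ** colrestrict J D0))^2
           \<le> (frob_norm ((mat 1 - PJ J (Dcurve D0 W v t)) ** colrestrict J D0))^2
       \<and> (frob_norm ((mat 1 - PJ J (Dcurve D0 W v t)) ** colrestrict J D0))^2
           \<le> t^2 * (norm (vrestrict J v))^2"
proof -
  define D where "D = Dcurve D0 W v t"
  define S where "S = {column k D | k. k \<in> J}"
  have column_step: "(norm (column k D - column k D0))\<^sup>2 \<le> (t * v$k)\<^sup>2" for k
    using norm_sq_rotation_diff_le[of "column k D0" "column k W" "v$k * t"] D0_unit W_unit W_orth
    by (simp add: D_def column_Dcurve inner_commute mult.commute)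
  have projected_step: "(norm ((mat 1 - PJ J D) *v column k D0))\<^sup>2 \<le> (t * v$k)\<^sup>2"
    if "k \<in> J" for k
  proof -
    have "column k D \<in> span S"
      using that by (auto simp: S_def intro: span_base)
    then have "norm ((mat 1 - PJ J D) *v column k D0) \<le> norm (column k D - column k D0)"
      using norm_diff_orth_proj_le[of "column k D" S "column k D0"]
      by (simp add: matrix_vector_mult_diff_rdistrib PJ_def proj_matrix_mult_vector
          S_def norm_minus_commute)
    then show ?thesis
      using column_step[of k] by (meson norm_ge_zero order_trans power_mono)
  qed
  have "(frob_norm (colrestrict J (D - D0)))\<^sup>2 \<le> t\<^sup>2 * (norm (vrestrict J v))\<^sup>2"
    by (rule frob_norm_sq_le_vrestrict) (simp_all add: column_colrestrict column_diff column_step)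
  moreover have "(frob_norm ((mat 1 - PJ J D) ** colrestrict J D0))\<^sup>2 \<le> t\<^sup>2 * (norm (vrestrict J v))\<^sup>2"
    by (rule frob_norm_sq_le_vrestrict) (simp_all add: column_matrix_mult column_colrestrict projected_step)
  ultimately show ?thesis
    using spec_norm_sq_le_frob_norm_sq unfolding D_def by blast
qed

end
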